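(* The constant stationary solution $\overline U\equiv\kappa$ is linearly stable if $\kappa<1+4\pi^2D$ and linearly unstable if $\kappa>1+4\pi^2D$.
   Context: $\mathbb{T}=[0,1]$ with endpoints identified; $D>0,\kappa>0$. Evolution problem: $\partial_tu=Du_{xx}-u+\kappa e^u/\int_0^1e^{u}dy$ with periodic boundary conditions; $\overline U\equiv\kappa$ is its unique constant stationary solution. The linearization at $\overline U$ is the operator $\varphi\mapsto D\varphi_{xx}+(\kappa-1)\varphi-\kappa\int_0^1\varphi\,dy$ on $L^2(\mathbb{T})$ with domain $W^{2,2}(\mathbb{T})$. Linearly stable means all its eigenvalues are negative; linearly unstable means it has a positive eigenvalue. *)

theory Defs
  imports "HOL-Analysis.Analysis"
begin

text \<open>Functions on the circle T = [0,1] with endpoints identified are represented as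
  1-periodic functions on the reals.  A periodic function phi lies in W^{2,2}(T) with
  (weak) second derivative psi iff phi is C^1 and periodic, its derivative phi' is periodic
  and absolutely continuous with a.e. derivative psi, and psi is square integrable on [0,1].\<close>

definition W22_per :: "(real \<Rightarrow> real) \<Rightarrow> (real \<Rightarrow> real) \<Rightarrow> bool" where
  "W22_per \<phi> \<psi> \<longleftrightarrow>
     (\<forall>x. \<phi> (x + 1) = \<phi> x) \<and>
     \<psi> integrable_on {0..1} \<and> (\<lambda>x. (\<psi> x)\<^sup>2) integrable_on {0..1} \<and>
     (\<exists>\<phi>'. (\<forall>x. (\<phi> has_real_derivative \<phi>' x) (at x)) \<and>
           (\<forall>x. \<phi>' (x + 1) = \<phi>' x) \<and>
           (\<forall>x\<in>{0..1}. \<phi>' x = \<phi>' 0 + integral {0..x} \<psi>))"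

text \<open>Eigenvalue of the linearization
  L phi = D phi'' + (kappa - 1) phi - kappa * int_0^1 phi  on L^2(T), domain W^{2,2}(T):
  a nonzero phi in the domain with L phi = lambda phi in L^2, i.e. almost everywhere.\<close>

definition lin_eigenvalue :: "real \<Rightarrow> real \<Rightarrow> real \<Rightarrow> bool" where
  "lin_eigenvalue D \<kappa> \<mu> \<longleftrightarrow>
     (\<exists>\<phi> \<psi>. W22_per \<phi> \<psi> \<and> (\<exists>x. \<phi> x \<noteq> 0) \<and>
        {x\<in>{0..1}. D * \<psi> x + (\<kappa> - 1) * \<phi> x - \<kappa> * integral {0..1} \<phi> \<noteq> \<mu> * \<phi> x}
          \<in> null_sets lebesgue)"

definition linearly_stable :: "real \<Rightarrow> real \<Rightarrow> bool" where
  "linearly_stable D \<kappa> \<longleftrightarrow> (\<forall>\<mu>. lin_eigenvalue D \<kappa> \<mu> \<longrightarrow> \<mu> < 0)"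

definition linearly_unstable :: "real \<Rightarrow> real \<Rightarrow> bool" where
  "linearly_unstable D \<kappa> \<longleftrightarrow> (\<exists>\<mu>>0. lin_eigenvalue D \<kappa> \<mu>)"

end

(* An eigenfunction phi with eigenvalue mu >= 0 is a classical 1-periodic solution of
   D phi'' = (mu - kappa + 1) phi + kappa m, where m is the mean of phi. Integrating over a
   period gives (mu + 1) m = 0, so m = 0 and phi'' = c phi with c = (mu - kappa + 1) / D,
   and c > -4 pi^2 when kappa < 1 + 4 pi^2 D. For c >= 0 the energy identity
   int (phi'^2 + c phi^2) = [phi phi'] = 0 makes phi constant, hence zero; for c = -w^2 with
   0 < w < 2 pi, phi = A cos (w x) + B sin (w x), and periodicity forces A = B = 0 because
   cos w <> 1. Conversely cos (2 pi x) is an eigenfunction with eigenvalue kappa - 1 - 4 pi^2 D. *)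

theory Submission
  imports Defs "HOL-Library.Periodic_Fun"
begin

lemma periodic_vanishes_if_vanishes_on_unit_interval:
  fixes f :: "real \<Rightarrow> 'a::zero"
  assumes "\<And>x. f (x + 1) = f x" and "\<And>x. x \<in> {0..1} \<Longrightarrow> f x = 0"
  shows "f y = 0"
proof -
  interpret periodic_fun_simple' f by standard (fact assms(1))
  have "f y = f (frac y)" using plus_of_int[of "frac y" "\<lfloor>y\<rfloor>"] by (simp add: frac_def)
  also have "\<dots> = 0" using assms(2)[of "frac y"] frac_ge_0[of y] frac_lt_1[of y] by simp
  finally show ?thesis .
qed

lemma has_real_derivative_integral_ae_eq:
  fixes F \<psi> h :: "real \<Rightarrow> real"
  assumes F: "\<And>y. y \<in> {a..b} \<Longrightarrow> F y = F a + integral {a..y} \<psi>"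
    and ae: "negligible {y\<in>{a..b}. \<psi> y \<noteq> h y}"
    and h: "continuous_on {a..b} h" and x: "x \<in> {a..b}"
  shows "(F has_real_derivative h x) (at x within {a..b})"
proof -
  have spike: "integral {a..y} \<psi> = integral {a..y} h" if "y \<in> {a..b}" for y
    by (rule integral_spike[OF ae]) (use that in auto)
  have "((\<lambda>y. F a + integral {a..y} h) has_real_derivative h x) (at x within {a..b})"
    using DERIV_add[OF DERIV_const integral_has_real_derivative[OF h x]] by simp
  then show ?thesis
  proof (rule has_field_derivative_transform_within[where d=1])
    show "F a + integral {a..y} h = F y" if "y \<in> {a..b}" for y
      using F[OF that] spike[OF that] by simp
  qed (use x in auto)
qed

lemma second_order_solution_const_if_coeff_nonneg:
  fixes u u' :: "real \<Rightarrow> real" and c :: real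
  assumes "a < b" and "c \<ge> 0"
    and u: "\<And>x. x \<in> {a..b} \<Longrightarrow> (u has_real_derivative u' x) (at x within {a..b})"
    and u': "\<And>x. x \<in> {a..b} \<Longrightarrow> (u' has_real_derivative c * u x) (at x within {a..b})"
    and boundary: "u b * u' b = u a * u' a"
  obtains k where "\<And>x. x \<in> {a..b} \<Longrightarrow> u x = k"
proof -
  define e where "e x = (u' x)\<^sup>2 + c * (u x)\<^sup>2" for x
  have "(e has_integral u b * u' b - u a * u' a) {a..b}"
  proof (rule fundamental_theorem_of_calculus)
    fix x assume x: "x \<in> {a..b}"
    have "((\<lambda>x. u x * u' x) has_real_derivative e x) (at x within {a..b})"
      using DERIV_mult'[OF u[OF x] u'[OF x]] by (simp add: e_def power2_eq_square algebra_simps)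
    then show "((\<lambda>x. u x * u' x) has_vector_derivative e x) (at x within {a..b})"
      by (simp add: has_real_derivative_iff_has_vector_derivative)
  qed (use \<open>a < b\<close> in simp)
  then have "(e has_integral 0) (cbox a b)" using boundary by simp
  moreover have "continuous_on (cbox a b) e"
    using DERIV_continuous_on[OF u] DERIV_continuous_on[OF u'] unfolding e_def
    by (auto intro!: continuous_intros)
  ultimately have "e x = 0" if "x \<in> {a..b}" for x
    using has_integral_0_cbox_imp_0[of a b e x] that \<open>a < b\<close> \<open>c \<ge> 0\<close> by (simp add: e_def)
  moreover have "0 \<le> c * (u x)\<^sup>2" for x
    using \<open>c \<ge> 0\<close> by simp
  ultimately have "(u' x)\<^sup>2 = 0" if "x \<in> {a..b}" for x
    using that unfolding e_def by (smt (verit) zero_le_power2)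
  then have "(u has_real_derivative 0) (at x within {a..b})" if "x \<in> {a..b}" for x
    using u[OF that] that by simp
  then obtain k where "\<forall>x\<in>{a..b}. u x = k"
    using has_field_derivative_zero_constant[of "{a..b}" u] by auto
  then show thesis using that by blast
qed

lemma harmonic_oscillator_zero_initial_data:
  fixes g g' :: "real \<Rightarrow> real" and k :: real
  assumes "convex S" and "a \<in> S" and "k > 0"
    and g: "\<And>x. x \<in> S \<Longrightarrow> (g has_real_derivative g' x) (at x within S)"
    and g': "\<And>x. x \<in> S \<Longrightarrow> (g' has_real_derivative - k * g x) (at x within S)"
    and "g a = 0" and "g' a = 0" and "x \<in> S"
  shows "g x = 0" and "g' x = 0"
proof -
  define E where "E x = (g' x)\<^sup>2 + k * (g x)\<^sup>2" for x
  have "(E has_real_derivative 0) (at y within S)" if "y \<in> S" for y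
  proof -
    have "(E has_real_derivative 2 * g' y * (- k * g y) + k * (2 * g y * g' y)) (at y within S)"
      unfolding E_def by (rule derivative_eq_intros g g' that refl | simp)+
    then show ?thesis by (simp add: algebra_simps)
  qed
  then obtain C where "\<forall>y\<in>S. E y = C"
    using has_field_derivative_zero_constant[OF \<open>convex S\<close>] by blast
  then have "(g' x)\<^sup>2 + k * (g x)\<^sup>2 = 0"
    using \<open>a \<in> S\<close> \<open>x \<in> S\<close> \<open>g a = 0\<close> \<open>g' a = 0\<close> by (auto simp: E_def)
  moreover have "0 \<le> k * (g x)\<^sup>2"
    using \<open>k > 0\<close> by simp
  ultimately have "(g' x)\<^sup>2 = 0" and "k * (g x)\<^sup>2 = 0"
    by (smt (verit) zero_le_power2)+
  then show "g x = 0" and "g' x = 0"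
    using \<open>k > 0\<close> by simp_all
qed

lemma harmonic_oscillator_solution:
  fixes u u' :: "real \<Rightarrow> real" and \<omega> :: real
  assumes "convex S" and "0 \<in> S" and "\<omega> > 0"
    and u: "\<And>x. x \<in> S \<Longrightarrow> (u has_real_derivative u' x) (at x within S)"
    and u': "\<And>x. x \<in> S \<Longrightarrow> (u' has_real_derivative - \<omega>\<^sup>2 * u x) (at x within S)"
    and "x \<in> S"
  shows "u x = u 0 * cos (\<omega> * x) + u' 0 / \<omega> * sin (\<omega> * x)"
    and "u' x = u' 0 * cos (\<omega> * x) - \<omega> * u 0 * sin (\<omega> * x)"
proof -
  define g where "g y = u y - (u 0 * cos (\<omega> * y) + u' 0 / \<omega> * sin (\<omega> * y))" for y
  define g' where "g' y = u' y - (u' 0 * cos (\<omega> * y) - \<omega> * u 0 * sin (\<omega> * y))" for y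
  have "(g has_real_derivative g' y) (at y within S)" if "y \<in> S" for y
    unfolding g_def g'_def using \<open>\<omega> > 0\<close>
    by (auto intro!: derivative_eq_intros u[OF that] simp: algebra_simps)
  moreover have "(g' has_real_derivative - \<omega>\<^sup>2 * g y) (at y within S)" if "y \<in> S" for y
    unfolding g_def g'_def
    by (auto intro!: derivative_eq_intros u'[OF that] simp: algebra_simps power2_eq_square)
  moreover have "g 0 = 0" and "g' 0 = 0"
    using \<open>\<omega> > 0\<close> by (simp_all add: g_def g'_def)
  ultimately have "g x = 0" and "g' x = 0"
    using harmonic_oscillator_zero_initial_data[of S 0 "\<omega>\<^sup>2" g g' x] assms(1-3,6) by auto
  then show "u x = u 0 * cos (\<omega> * x) + u' 0 / \<omega> * sin (\<omega> * x)"
    and "u' x = u' 0 * cos (\<omega> * x) - \<omega> * u 0 * sin (\<omega> * x)"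
    by (simp_all add: g_def g'_def)
qed

lemma cos_ne_1_if_in_open_period:
  fixes x :: real
  assumes "0 < x" and "x < 2 * pi"
  shows "cos x \<noteq> 1"
proof
  assume "cos x = 1"
  then obtain n :: int where n: "x = of_int n * 2 * pi"
    by (auto simp: cos_one_2pi_int)
  with assms have "0 < real_of_int n" and "real_of_int n < 1"
    by (simp_all add: zero_less_mult_iff)
  then have "0 < n" and "n < 1"
    by simp_all
  then show False by linarith
qed

lemma harmonic_oscillator_periodic_solution_zero:
  fixes u u' :: "real \<Rightarrow> real" and \<omega> :: real
  assumes "0 < \<omega>" and "\<omega> < 2 * pi"
    and u: "\<And>x. x \<in> {0..1} \<Longrightarrow> (u has_real_derivative u' x) (at x within {0..1})"
    and u': "\<And>x. x \<in> {0..1} \<Longrightarrow> (u' has_real_derivative - \<omega>\<^sup>2 * u x) (at x within {0..1})"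
    and "u 1 = u 0" and "u' 1 = u' 0" and "x \<in> {0..1}"
  shows "u x = 0"
proof -
  define A where "A = u 0"
  define B where "B = u' 0 / \<omega>"
  have solution: "u y = A * cos (\<omega> * y) + B * sin (\<omega> * y)"
    "u' y = B * \<omega> * cos (\<omega> * y) - \<omega> * A * sin (\<omega> * y)" if "y \<in> {0..1}" for y
    using harmonic_oscillator_solution[of "{0..1}" \<omega> u u' y] u u' that \<open>0 < \<omega>\<close>
    by (auto simp: A_def B_def)
  have "A * cos \<omega> + B * sin \<omega> = A"
    using solution(1)[of 1] \<open>u 1 = u 0\<close> by (simp add: A_def)
  moreover have "B * cos \<omega> - A * sin \<omega> = B"
    using solution(2)[of 1] \<open>u' 1 = u' 0\<close> \<open>0 < \<omega>\<close> by (simp add: B_def field_simps)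
  moreover have "(A\<^sup>2 + B\<^sup>2) * (1 - cos \<omega>)
      = A * (A - (A * cos \<omega> + B * sin \<omega>)) + B * (B - (B * cos \<omega> - A * sin \<omega>))"
    by (simp add: algebra_simps power2_eq_square)
  ultimately have "(A\<^sup>2 + B\<^sup>2) * (1 - cos \<omega>) = 0"
    by simp
  then have "A = 0" and "B = 0"
    using cos_ne_1_if_in_open_period[OF assms(1,2)] by (simp_all add: sum_power2_eq_zero_iff)
  then show ?thesis
    using solution(1)[OF \<open>x \<in> {0..1}\<close>] by simp
qed

lemma periodic_mean_zero_solution_vanishes:
  fixes u u' :: "real \<Rightarrow> real" and c :: real
  assumes "c > - 4 * pi\<^sup>2"
    and u: "\<And>x. x \<in> {0..1} \<Longrightarrow> (u has_real_derivative u' x) (at x within {0..1})"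
    and u': "\<And>x. x \<in> {0..1} \<Longrightarrow> (u' has_real_derivative c * u x) (at x within {0..1})"
    and "u 1 = u 0" and "u' 1 = u' 0" and "integral {0..1} u = 0" and "x \<in> {0..1}"
  shows "u x = 0"
proof (cases "c \<ge> 0")
  case True
  then obtain k where k: "\<And>y. y \<in> {0..1} \<Longrightarrow> u y = k"
    using second_order_solution_const_if_coeff_nonneg[of 0 1 c u u'] u u' assms(4,5) by auto
  then have "integral {0..1} u = k"
    using integral_cong[of "{0..1}" u "\<lambda>_. k"] by simp
  then show ?thesis
    using k \<open>integral {0..1} u = 0\<close> \<open>x \<in> {0..1}\<close> by simp
next
  case False
  define \<omega> where "\<omega> = sqrt (- c)"
  have "0 < \<omega>" and "c = - \<omega>\<^sup>2"
    using False by (simp_all add: \<omega>_def)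
  moreover have "\<omega> < sqrt ((2 * pi)\<^sup>2)"
    unfolding \<omega>_def using \<open>c > - 4 * pi\<^sup>2\<close> by (simp add: power_mult_distrib)
  then have "\<omega> < 2 * pi"
    using real_sqrt_abs[of "2 * pi"] by simp
  ultimately show ?thesis
    using harmonic_oscillator_periodic_solution_zero[of \<omega> u u' x] u u' assms(4-) by simp
qed

lemma eigenfunction_has_classical_second_derivative:
  fixes D \<kappa> \<mu> :: real and \<phi> \<psi> :: "real \<Rightarrow> real"
  assumes "D > 0" and "W22_per \<phi> \<psi>"
    and eigen: "negligible {x\<in>{0..1}. D * \<psi> x + (\<kappa> - 1) * \<phi> x - \<kappa> * integral {0..1} \<phi> \<noteq> \<mu> * \<phi> x}"
  obtains \<phi>' where "\<And>x. \<phi> (x + 1) = \<phi> x" and "\<And>x. (\<phi> has_real_derivative \<phi>' x) (at x)"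
    and "\<And>x. \<phi>' (x + 1) = \<phi>' x"
    and "\<And>x. x \<in> {0..1} \<Longrightarrow> (\<phi>' has_real_derivative
           (\<mu> - \<kappa> + 1) / D * \<phi> x + \<kappa> * integral {0..1} \<phi> / D) (at x within {0..1})"
proof -
  obtain \<phi>' where per: "\<And>x. \<phi> (x + 1) = \<phi> x"
    and der: "\<And>x. (\<phi> has_real_derivative \<phi>' x) (at x)"
    and per': "\<And>x. \<phi>' (x + 1) = \<phi>' x"
    and rep: "\<And>x. x \<in> {0..1} \<Longrightarrow> \<phi>' x = \<phi>' 0 + integral {0..x} \<psi>"
    using \<open>W22_per \<phi> \<psi>\<close> unfolding W22_per_def by blast
  define h where "h x = (\<mu> - \<kappa> + 1) / D * \<phi> x + \<kappa> * integral {0..1} \<phi> / D" for x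
  have "{x\<in>{0..1}. \<psi> x \<noteq> h x}
      \<subseteq> {x\<in>{0..1}. D * \<psi> x + (\<kappa> - 1) * \<phi> x - \<kappa> * integral {0..1} \<phi> \<noteq> \<mu> * \<phi> x}"
    using \<open>D > 0\<close> by (auto simp: h_def field_simps)
  then have "negligible {x\<in>{0..1}. \<psi> x \<noteq> h x}"
    using eigen negligible_subset by blast
  moreover have "continuous_on {0..1} \<phi>"
    using DERIV_continuous_on der has_field_derivative_at_within by blast
  then have "continuous_on {0..1} h"
    unfolding h_def using \<open>D > 0\<close> by (intro continuous_intros) auto
  ultimately have "(\<phi>' has_real_derivative h x) (at x within {0..1})" if "x \<in> {0..1}" for x
    using has_real_derivative_integral_ae_eq[OF rep _ _ that] by blast
  then show thesis
    using that per der per' unfolding h_def by blast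
qed

lemma integral_second_derivative_affine_periodic:
  fixes u u' :: "real \<Rightarrow> real" and c d :: real
  assumes u: "\<And>x. (u has_real_derivative u' x) (at x within {0..1})"
    and u': "\<And>x. x \<in> {0..1} \<Longrightarrow> (u' has_real_derivative c * u x + d) (at x within {0..1})"
    and "u' 1 = u' 0"
  shows "c * integral {0..1} u + d = 0"
proof -
  have "(u has_integral integral {0..1} u) {0..1}"
    using DERIV_continuous_on[of "{0..1}" u u'] u
    by (blast intro: integrable_integral integrable_continuous_real)
  then have "((\<lambda>x. c * u x + d) has_integral c * integral {0..1} u + d) {0..1}"
    using has_integral_const_real[of d 0 1]
    by (intro has_integral_add has_integral_mult_right) simp_all
  moreover have "((\<lambda>x. c * u x + d) has_integral u' 1 - u' 0) {0..1}"
  proof (rule fundamental_theorem_of_calculus)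
    fix x :: real assume "x \<in> {0..1}"
    then show "(u' has_vector_derivative c * u x + d) (at x within {0..1})"
      using u' has_real_derivative_iff_has_vector_derivative by blast
  qed simp
  ultimately have "c * integral {0..1} u + d = u' 1 - u' 0"
    by (rule has_integral_unique)
  then show ?thesis
    using \<open>u' 1 = u' 0\<close> by simp
qed

lemma lin_eigenvalue_neg:
  fixes D \<kappa> \<mu> :: real
  assumes "D > 0" and "\<kappa> < 1 + 4 * pi\<^sup>2 * D" and "lin_eigenvalue D \<kappa> \<mu>"
  shows "\<mu> < 0"
proof (rule ccontr)
  assume "\<not> \<mu> < 0"
  obtain \<phi> \<psi> x0 where "W22_per \<phi> \<psi>" and "\<phi> x0 \<noteq> 0"
    and "negligible {x\<in>{0..1}. D * \<psi> x + (\<kappa> - 1) * \<phi> x - \<kappa> * integral {0..1} \<phi> \<noteq> \<mu> * \<phi> x}"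
    using \<open>lin_eigenvalue D \<kappa> \<mu>\<close> unfolding lin_eigenvalue_def negligible_iff_null_sets by blast
  note eigenfunction = this
  obtain \<phi>' where per: "\<And>x. \<phi> (x + 1) = \<phi> x"
    and der: "\<And>x. (\<phi> has_real_derivative \<phi>' x) (at x)"
    and per': "\<And>x. \<phi>' (x + 1) = \<phi>' x"
    and der': "\<And>x. x \<in> {0..1} \<Longrightarrow> (\<phi>' has_real_derivative
           (\<mu> - \<kappa> + 1) / D * \<phi> x + \<kappa> * integral {0..1} \<phi> / D) (at x within {0..1})"
    using eigenfunction_has_classical_second_derivative[OF \<open>D > 0\<close> eigenfunction(1,3)] by blast
  define m where "m = integral {0..1} \<phi>"
  define c where "c = (\<mu> - \<kappa> + 1) / D"
  have der_within: "(\<phi> has_real_derivative \<phi>' x) (at x within {0..1})" for x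
    using der has_field_derivative_at_within by blast
  have "c * m + \<kappa> * m / D = 0"
    using integral_second_derivative_affine_periodic[OF der_within der'] per'[of 0]
    by (simp add: c_def m_def)
  then have "(\<mu> + 1) * m = 0"
    using \<open>D > 0\<close> by (simp add: c_def field_simps)
  then have "m = 0"
    using \<open>\<not> \<mu> < 0\<close> by simp
  have "c > - 4 * pi\<^sup>2"
    using \<open>\<not> \<mu> < 0\<close> \<open>\<kappa> < 1 + 4 * pi\<^sup>2 * D\<close> \<open>D > 0\<close> by (simp add: c_def field_simps)
  then have "\<phi> x = 0" if "x \<in> {0..1}" for x
    using periodic_mean_zero_solution_vanishes[of c \<phi> \<phi>' x] der_within der' per[of 0] per'[of 0] \<open>m = 0\<close> that
    by (simp add: c_def m_def)
  then have "\<phi> x0 = 0"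
    using periodic_vanishes_if_vanishes_on_unit_interval per by blast
  with \<open>\<phi> x0 \<noteq> 0\<close> show False ..
qed

lemma W22_per_if_twice_differentiable:
  fixes \<phi> \<phi>' \<psi> :: "real \<Rightarrow> real"
  assumes "\<And>x. \<phi> (x + 1) = \<phi> x" and "\<And>x. \<phi>' (x + 1) = \<phi>' x"
    and "\<And>x. (\<phi> has_real_derivative \<phi>' x) (at x)"
    and "\<And>x. (\<phi>' has_real_derivative \<psi> x) (at x)"
    and "continuous_on {0..1} \<psi>"
  shows "W22_per \<phi> \<psi>"
proof -
  have "\<phi>' x = \<phi>' 0 + integral {0..x} \<psi>" if "x \<in> {0..1}" for x
  proof -
    have "(\<psi> has_integral \<phi>' x - \<phi>' 0) {0..x}"
      using that assms(4)
      by (intro fundamental_theorem_of_calculus)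
        (auto simp: has_real_derivative_iff_has_vector_derivative[symmetric]
          intro: has_field_derivative_at_within)
    then show ?thesis
      by (simp add: integral_unique)
  qed
  moreover have "\<psi> integrable_on {0..1}" and "(\<lambda>x. (\<psi> x)\<^sup>2) integrable_on {0..1}"
    using assms(5) by (auto intro!: integrable_continuous_real continuous_intros)
  ultimately show ?thesis
    unfolding W22_per_def using assms(1-3) by blast
qed

lemma lin_eigenvalue_first_mode:
  fixes D \<kappa> :: real
  shows "lin_eigenvalue D \<kappa> (\<kappa> - 1 - 4 * pi\<^sup>2 * D)"
proof -
  define \<phi> where "\<phi> x = cos (2 * pi * x)" for x :: real
  define \<psi> where "\<psi> x = - (4 * pi\<^sup>2) * cos (2 * pi * x)" for x :: real
  have "W22_per \<phi> \<psi>"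
  proof (rule W22_per_if_twice_differentiable)
    show "\<phi> (x + 1) = \<phi> x" and "- 2 * pi * sin (2 * pi * (x + 1)) = - 2 * pi * sin (2 * pi * x)" for x
      unfolding \<phi>_def by (simp_all add: distrib_left cos_add sin_add)
    show "(\<phi> has_real_derivative - 2 * pi * sin (2 * pi * x)) (at x)" for x
      unfolding \<phi>_def by (auto intro!: derivative_eq_intros)
    show "((\<lambda>x. - 2 * pi * sin (2 * pi * x)) has_real_derivative \<psi> x) (at x)" for x
      unfolding \<psi>_def by (auto intro!: derivative_eq_intros simp: power2_eq_square)
    show "continuous_on {0..1} \<psi>"
      unfolding \<psi>_def by (intro continuous_intros)
  qed
  have "integral {0..1} \<phi> = 0"
  proof -
    have "(\<phi> has_integral sin (2 * pi * 1) / (2 * pi) - sin (2 * pi * 0) / (2 * pi)) {0..1}"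
    proof (rule fundamental_theorem_of_calculus)
      fix x :: real
      have "((\<lambda>x. sin (2 * pi * x) / (2 * pi)) has_real_derivative \<phi> x) (at x within {0..1})"
        unfolding \<phi>_def by (auto intro!: derivative_eq_intros)
      then show "((\<lambda>x. sin (2 * pi * x) / (2 * pi)) has_vector_derivative \<phi> x) (at x within {0..1})"
        by (simp add: has_real_derivative_iff_has_vector_derivative)
    qed simp
    then show ?thesis
      by (simp add: integral_unique)
  qed
  then have "D * \<psi> x + (\<kappa> - 1) * \<phi> x - \<kappa> * integral {0..1} \<phi> = (\<kappa> - 1 - 4 * pi\<^sup>2 * D) * \<phi> x" for x
    unfolding \<phi>_def \<psi>_def by (simp add: algebra_simps)
  then have "{x\<in>{0..1}. D * \<psi> x + (\<kappa> - 1) * \<phi> x - \<kappa> * integral {0..1} \<phi>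
      \<noteq> (\<kappa> - 1 - 4 * pi\<^sup>2 * D) * \<phi> x} \<in> null_sets lebesgue"
    by simp
  moreover have "\<phi> 0 \<noteq> 0"
    by (simp add: \<phi>_def)
  ultimately show ?thesis
    unfolding lin_eigenvalue_def using \<open>W22_per \<phi> \<psi>\<close> by blast
qed

theorem mainTheorem6:
  fixes D \<kappa> :: real
  assumes "D > 0" and "\<kappa> > 0"
  shows "(\<kappa> < 1 + 4 * pi\<^sup>2 * D \<longrightarrow> linearly_stable D \<kappa>) \<and>
         (\<kappa> > 1 + 4 * pi\<^sup>2 * D \<longrightarrow> linearly_unstable D \<kappa>)"
proof (intro conjI impI)
  assume "\<kappa> < 1 + 4 * pi\<^sup>2 * D"
  then show "linearly_stable D \<kappa>"
    unfolding linearly_stable_def using lin_eigenvalue_neg \<open>D > 0\<close> by blast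
next
  assume "\<kappa> > 1 + 4 * pi\<^sup>2 * D"
  then show "linearly_unstable D \<kappa>"
    unfolding linearly_unstable_def using lin_eigenvalue_first_mode[of D \<kappa>]
    by (intro exI[of _ "\<kappa> - 1 - 4 * pi\<^sup>2 * D"]) simp
qed

end
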